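(* For every hypothesis class $\mathcal{H}\subseteq\{0,1\}^{\mathcal{X}}$, $\mathtt{LD}(\mathcal{H})\le\mathtt{CD}(\mathcal{H})$.
   Context: A dataset of size $m$ is $S=((x_1,y_1),\dots,(x_m,y_m))\in(\mathcal{X}\times\{0,1\})^m$; it is $\mathcal{H}$-realizable if some $h\in\mathcal{H}$ satisfies $h(x_i)=y_i$ for all $i$. $G_m(\mathcal{H})$ is the graph on realizable datasets of size $m$ with $S,S'$ adjacent iff there is $x$ with $(x,0)$ appearing in $S$ and $(x,1)$ appearing in $S'$; $\omega_m$ is its clique number; $\mathtt{CD}(\mathcal{H})=\sup\{m:\omega_m=2^m\}\in\mathbb{N}\cup\{\infty\}$. A mistake tree is a complete binary tree whose internal nodes are labeled by points of $\mathcal{X}$, each internal node having one outgoing edge labeled $0$ and one labeled $1$; a root-to-leaf path yields the sequence $(x_1,y_1),\dots,(x_d,y_d)$ of node labels and edge labels. $\mathcal{H}$ shatters the tree if every root-to-leaf path is realizable by $\mathcal{H}$. $\mathtt{LD}(\mathcal{H})$ is the largest $d$ such that a complete mistake tree of depth $d$ is shattered by $\mathcal{H}$ ($\infty$ if arbitrarily deep ones exist). *)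

theory Defs
  imports Main "HOL-Library.Extended_Nat"
begin

text \<open>Hypotheses are functions X => bool (False = label 0, True = label 1);
a hypothesis class is a set of such functions. Datasets are lists of labelled points.\<close>

definition realizable :: "('x \<Rightarrow> bool) set \<Rightarrow> ('x \<times> bool) list \<Rightarrow> bool" where
  "realizable H S \<longleftrightarrow> (\<exists>h\<in>H. \<forall>(x, y)\<in>set S. h x = y)"

text \<open>Vertices of G_m(H): realizable datasets of size m.\<close>
definition datasets :: "('x \<Rightarrow> bool) set \<Rightarrow> nat \<Rightarrow> ('x \<times> bool) list set" where
  "datasets H m = {S. length S = m \<and> realizable H S}"

text \<open>Adjacency in G_m(H) (undirected): some point appears labelled 0 in one and 1 in the other.\<close>
definition adjacent :: "('x \<times> bool) list \<Rightarrow> ('x \<times> bool) list \<Rightarrow> bool" where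
  "adjacent S S' \<longleftrightarrow> (\<exists>x. ((x, False) \<in> set S \<and> (x, True) \<in> set S') \<or>
                            ((x, True) \<in> set S \<and> (x, False) \<in> set S'))"

definition is_clique :: "('x \<Rightarrow> bool) set \<Rightarrow> nat \<Rightarrow> ('x \<times> bool) list set \<Rightarrow> bool" where
  "is_clique H m C \<longleftrightarrow> C \<subseteq> datasets H m \<and>
     (\<forall>S\<in>C. \<forall>S'\<in>C. S \<noteq> S' \<longrightarrow> adjacent S S')"

definition clique_number :: "('x \<Rightarrow> bool) set \<Rightarrow> nat \<Rightarrow> enat" where
  "clique_number H m = Sup {enat (card C) | C. finite C \<and> is_clique H m C}"

definition CD :: "('x \<Rightarrow> bool) set \<Rightarrow> enat" where
  "CD H = Sup {enat m | m. clique_number H m = enat (2 ^ m)}"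

datatype 'x mtree = Leaf | Node 'x "'x mtree" "'x mtree"

fun complete_depth :: "'x mtree \<Rightarrow> nat \<Rightarrow> bool" where
  "complete_depth Leaf d = (d = 0)"
| "complete_depth (Node x t0 t1) d =
     (\<exists>d'. d = Suc d' \<and> complete_depth t0 d' \<and> complete_depth t1 d')"

fun paths :: "'x mtree \<Rightarrow> ('x \<times> bool) list set" where
  "paths Leaf = {[]}"
| "paths (Node x t0 t1) = ((#) (x, False)) ` paths t0 \<union> ((#) (x, True)) ` paths t1"

definition shatters :: "('x \<Rightarrow> bool) set \<Rightarrow> 'x mtree \<Rightarrow> bool" where
  "shatters H T \<longleftrightarrow> (\<forall>p\<in>paths T. realizable H p)"

definition LD :: "('x \<Rightarrow> bool) set \<Rightarrow> enat" where
  "LD H = Sup {enat d | d. \<exists>T. complete_depth T d \<and> shatters H T}"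

end

theory Submission
  imports Defs
begin

text \<open>The 2^d root-to-leaf paths of a shattered complete mistake tree of depth d are realizable
datasets of size d, and any two of them are adjacent at the node where they branch; so they form
a clique of size 2^d in G_d(H). Conversely no clique in G_m(H) exceeds 2^m: fix a finite ground
set P containing all points occurring in the clique. A realizable dataset of size m is consistent
with at least 2^(|P|-m) subsets of P, and adjacent datasets have no consistent subset in common,
so the clique has at most 2^|P| / 2^(|P|-m) elements. Hence omega_d = 2^d whenever a depth d tree
is shattered, i.e. every such d is below CD(H).\<close>

lemma finite_paths: "finite (paths T)"
  by (induction T) auto

lemma length_paths: "complete_depth T d \<Longrightarrow> p \<in> paths T \<Longrightarrow> length p = d"
  by (induction T arbitrary: d p) auto

lemma card_paths: "complete_depth T d \<Longrightarrow> card (paths T) = 2 ^ d"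
proof (induction T arbitrary: d)
  case Leaf
  then show ?case by simp
next
  case (Node x t0 t1)
  then obtain d' where d: "d = Suc d'" "complete_depth t0 d'" "complete_depth t1 d'"
    by auto
  have "((#) (x, False)) ` paths t0 \<inter> ((#) (x, True)) ` paths t1 = {}"
    by auto
  then have "card (paths (Node x t0 t1)) = card (paths t0) + card (paths t1)"
    by (simp add: card_Un_disjoint finite_paths card_image)
  then show ?case
    using Node.IH d by simp
qed

lemma adjacent_Cons: "adjacent p q \<Longrightarrow> adjacent (a # p) (a # q)"
  unfolding adjacent_def by auto

lemma paths_adjacent: "p \<in> paths T \<Longrightarrow> q \<in> paths T \<Longrightarrow> p \<noteq> q \<Longrightarrow> adjacent p q"
proof (induction T arbitrary: p q)
  case Leaf
  then show ?case by simp
next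
  case (Node x t0 t1)
  from Node.prems(1,2) consider
      (left) p' q' where "p = (x, False) # p'" "q = (x, False) # q'" "p' \<in> paths t0" "q' \<in> paths t0"
    | (right) p' q' where "p = (x, True) # p'" "q = (x, True) # q'" "p' \<in> paths t1" "q' \<in> paths t1"
    | (branch) "(x, False) \<in> set p \<and> (x, True) \<in> set q \<or> (x, True) \<in> set p \<and> (x, False) \<in> set q"
    by auto
  then show ?case
  proof cases
    case left
    then show ?thesis using Node.IH(1)[of p' q'] Node.prems(3) adjacent_Cons by auto
  next
    case right
    then show ?thesis using Node.IH(2)[of p' q'] Node.prems(3) adjacent_Cons by auto
  next
    case branch
    then show ?thesis unfolding adjacent_def by blast
  qed
qed

lemma shattered_paths_clique:
  assumes "complete_depth T d" and "shatters H T"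
  shows "is_clique H d (paths T)"
  using assms length_paths paths_adjacent
  unfolding is_clique_def datasets_def shatters_def by blast

definition consistent_subsets :: "'x set \<Rightarrow> ('x \<times> bool) list \<Rightarrow> 'x set set" where
  "consistent_subsets P S = {T \<in> Pow P. \<forall>(x, y) \<in> set S. (x \<in> T) = y}"

lemma card_subsets_agreeing:
  assumes "finite P" and "D \<subseteq> P"
  shows "card {T \<in> Pow P. \<forall>x \<in> D. (x \<in> T) = h x} = 2 ^ (card P - card D)"
proof -
  let ?A = "{T \<in> Pow P. \<forall>x \<in> D. (x \<in> T) = h x}"
  have "bij_betw (\<lambda>T. T - D) ?A (Pow (P - D))"
    by (rule bij_betw_byWitness[where f' = "\<lambda>U. U \<union> {x \<in> D. h x}"]) (use assms(2) in auto)
  then have "card ?A = card (Pow (P - D))"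
    by (rule bij_betw_same_card)
  also have "\<dots> = 2 ^ (card P - card D)"
    using assms by (simp add: card_Pow card_Diff_subset finite_subset)
  finally show ?thesis .
qed

lemma card_consistent_subsets_ge:
  assumes "finite P" and "fst ` set S \<subseteq> P" and "realizable H S"
  shows "2 ^ (card P - length S) \<le> card (consistent_subsets P S)"
proof -
  from assms(3) obtain h where h: "\<forall>(x, y) \<in> set S. h x = y"
    unfolding realizable_def by blast
  have "consistent_subsets P S = {T \<in> Pow P. \<forall>x \<in> fst ` set S. (x \<in> T) = h x}"
    using h unfolding consistent_subsets_def by fastforce
  then have "card (consistent_subsets P S) = 2 ^ (card P - card (fst ` set S))"
    using card_subsets_agreeing[OF assms(1,2)] by simp
  moreover have "card (fst ` set S) \<le> length S"
    using card_image_le[of "set S" fst] card_length[of S] by simp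
  ultimately show ?thesis
    by (simp add: power_increasing)
qed

lemma adjacent_consistent_subsets_disjoint:
  "adjacent S S' \<Longrightarrow> consistent_subsets P S \<inter> consistent_subsets P S' = {}"
  unfolding adjacent_def consistent_subsets_def by fastforce

lemma card_clique_le:
  assumes fin: "finite C" and clique: "is_clique H m C"
  shows "card C \<le> 2 ^ m"
proof -
  define P where "P = (\<Union>S\<in>C. fst ` set S)"
  have "finite P"
    unfolding P_def using fin by auto
  have "card C * 2 ^ (card P - m) = (\<Sum>S\<in>C. 2 ^ (card P - m))"
    by simp
  also have "\<dots> \<le> (\<Sum>S\<in>C. card (consistent_subsets P S))"
  proof (rule sum_mono)
    fix S assume "S \<in> C"
    then have "S \<in> datasets H m" and "fst ` set S \<subseteq> P"
      using clique unfolding is_clique_def P_def by auto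
    then show "2 ^ (card P - m) \<le> card (consistent_subsets P S)"
      using card_consistent_subsets_ge[OF \<open>finite P\<close>] unfolding datasets_def by auto
  qed
  also have "\<dots> = card (\<Union>S\<in>C. consistent_subsets P S)"
  proof (rule card_UN_disjoint[symmetric, OF fin])
    show "\<forall>S\<in>C. finite (consistent_subsets P S)"
      using \<open>finite P\<close> by (simp add: consistent_subsets_def)
    show "\<forall>S\<in>C. \<forall>S'\<in>C. S \<noteq> S' \<longrightarrow> consistent_subsets P S \<inter> consistent_subsets P S' = {}"
      using clique adjacent_consistent_subsets_disjoint unfolding is_clique_def by blast
  qed
  also have "\<dots> \<le> card (Pow P)"
    using \<open>finite P\<close> by (intro card_mono) (auto simp: consistent_subsets_def)
  also have "\<dots> = 2 ^ card P"
    using \<open>finite P\<close> by (simp add: card_Pow)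
  finally have bound: "card C * 2 ^ (card P - m) \<le> 2 ^ card P" .
  show ?thesis
  proof (cases "card P \<le> m")
    case True
    then show ?thesis
      using bound power_increasing[of "card P" m "2::nat"] by (simp add: order_trans)
  next
    case False
    then have "(2::nat) ^ card P = 2 ^ m * 2 ^ (card P - m)"
      by (simp flip: power_add)
    then show ?thesis
      using bound by simp
  qed
qed

lemma clique_number_le: "clique_number H m \<le> enat (2 ^ m)"
  unfolding clique_number_def using card_clique_le by (intro Sup_least) auto

lemma shattered_clique_number:
  assumes "complete_depth T d" and "shatters H T"
  shows "clique_number H d = enat (2 ^ d)"
proof (rule antisym)
  show "clique_number H d \<le> enat (2 ^ d)"
    by (rule clique_number_le)
  have "enat (2 ^ d) \<in> {enat (card C) | C. finite C \<and> is_clique H d C}"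
    using finite_paths card_paths[OF assms(1)] shattered_paths_clique[OF assms] by force
  then show "enat (2 ^ d) \<le> clique_number H d"
    unfolding clique_number_def by (rule Sup_upper)
qed

theorem mainTheorem9:
  fixes H :: "('x \<Rightarrow> bool) set"
  shows "LD H \<le> CD H"
  unfolding LD_def CD_def
  by (rule Sup_subset_mono) (auto dest: shattered_clique_number)

end
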